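(* Let $G=(K\cup I,E)$ be a split graph and $(V,\mathcal{F})$ the split graph vertex shelling antimatroid defined on $G$. Let $u,v$ be distinct elements of $V$. Then $V\setminus\{u,v\}\in\mathcal{F}$ if and only if $u\sim v$, or at least one of $u,v$ is isolated in $G$.
   Context: A split graph $G=(K\cup I,E)$ is a finite simple graph whose vertex set $V=K\cup I$ comes with a fixed partition into a clique $K$ and an independent set $I$. We write $u\sim v$ if $u,v$ are adjacent; a vertex is isolated if it has no neighbours. A vertex is simplicial if its neighbours induce a clique. The split graph vertex shelling antimatroid of $G$ is $(V,\mathcal{F})$ where $F\subseteq V$ is feasible iff there is an ordering $f_1,\dots,f_{|F|}$ of $F$ such that each $f_j$ is simplicial in $G$ minus $\{f_1,\dots,f_{j-1}\}$ (the empty set is feasible). *)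

theory Defs
  imports Main
begin

definition split_graph :: "'a set \<Rightarrow> 'a set \<Rightarrow> ('a \<Rightarrow> 'a \<Rightarrow> bool) \<Rightarrow> bool" where
  "split_graph K I E \<longleftrightarrow>
     finite (K \<union> I) \<and> K \<inter> I = {} \<and>
     (\<forall>u v. E u v \<longrightarrow> u \<in> K \<union> I \<and> v \<in> K \<union> I) \<and>
     (\<forall>u v. E u v \<longrightarrow> E v u) \<and> (\<forall>u. \<not> E u u) \<and>
     (\<forall>u\<in>K. \<forall>v\<in>K. u \<noteq> v \<longrightarrow> E u v) \<and>
     (\<forall>u\<in>I. \<forall>v\<in>I. \<not> E u v)"

definition simplicial_in :: "'a set \<Rightarrow> ('a \<Rightarrow> 'a \<Rightarrow> bool) \<Rightarrow> 'a \<Rightarrow> bool" where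
  "simplicial_in W E x \<longleftrightarrow> x \<in> W \<and>
     (\<forall>y\<in>W. \<forall>z\<in>W. E x y \<and> E x z \<and> y \<noteq> z \<longrightarrow> E y z)"

definition shelling_feasible :: "'a set \<Rightarrow> ('a \<Rightarrow> 'a \<Rightarrow> bool) \<Rightarrow> 'a set \<Rightarrow> bool" where
  "shelling_feasible V E F \<longleftrightarrow>
     (\<exists>fs. distinct fs \<and> set fs = F \<and>
        (\<forall>j < length fs. simplicial_in (V - set (take j fs)) E (fs ! j)))"

definition isolated :: "('a \<Rightarrow> 'a \<Rightarrow> bool) \<Rightarrow> 'a \<Rightarrow> bool" where
  "isolated E u \<longleftrightarrow> (\<forall>w. \<not> E u w)"

end

theory Submission
  imports Defs
begin

text \<open>
  Vertices outside a feasible set F are never removed, so they are present whenever a vertex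
  of F is shelled. Hence if u and v are non-adjacent and both have a neighbour, no vertex can
  be adjacent to both of them and still be shelled; in a split graph such a vertex always
  exists: a common clique neighbour, or, when u and v both lie in I, the later-shelled one of
  their clique neighbours, which becomes adjacent to both when the other one is shelled.
  Conversely, when u \<sim> v or one of them is isolated, first shell I - {u, v}, then the clique
  vertices without a neighbour in {u, v} \<inter> I; in what remains any two non-isolated vertices
  are adjacent, so every remaining vertex is simplicial.
\<close>

fun shelling_seq :: "'a set \<Rightarrow> ('a \<Rightarrow> 'a \<Rightarrow> bool) \<Rightarrow> 'a list \<Rightarrow> bool" where
  "shelling_seq W E [] \<longleftrightarrow> True"
| "shelling_seq W E (x # xs) \<longleftrightarrow> simplicial_in W E x \<and> shelling_seq (W - {x}) E xs"

lemma simplicial_in_mono: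
  "simplicial_in W E x \<Longrightarrow> W' \<subseteq> W \<Longrightarrow> x \<in> W' \<Longrightarrow> simplicial_in W' E x"
  unfolding simplicial_in_def by blast

lemma shelling_seq_iff_nth:
  "shelling_seq W E fs \<longleftrightarrow> (\<forall>j < length fs. simplicial_in (W - set (take j fs)) E (fs ! j))"
proof (induction fs arbitrary: W)
  case (Cons x xs)
  then show ?case by (simp add: All_less_Suc2 Diff_insert2[symmetric])
qed simp

lemma shelling_seq_distinct_subset:
  "shelling_seq W E fs \<Longrightarrow> distinct fs \<and> set fs \<subseteq> W"
  by (induction fs arbitrary: W) (auto simp: simplicial_in_def)

lemma shelling_feasible_iff_shelling_seq:
  "shelling_feasible V E F \<longleftrightarrow> (\<exists>fs. shelling_seq V E fs \<and> set fs = F)"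
  unfolding shelling_feasible_def shelling_seq_iff_nth[symmetric]
  using shelling_seq_distinct_subset by blast

lemma shelling_seq_append:
  "shelling_seq W E (fs @ gs) \<longleftrightarrow> shelling_seq W E fs \<and> shelling_seq (W - set fs) E gs"
  by (induction fs arbitrary: W) (auto simp: Diff_insert2[symmetric])

lemma shelling_seq_if_all_simplicial:
  "distinct xs \<Longrightarrow> \<forall>x \<in> set xs. simplicial_in W E x \<Longrightarrow> shelling_seq W E xs"
proof (induction xs arbitrary: W)
  case (Cons x xs)
  have "simplicial_in (W - {x}) E y" if "y \<in> set xs" for y
  proof (rule simplicial_in_mono)
    show "simplicial_in W E y" using Cons.prems(2) that by simp
    then show "y \<in> W - {x}" using Cons.prems(1) that by (auto simp: simplicial_in_def)
  qed blast
  with Cons show ?case by simp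
qed simp

lemma shelling_seq_of_simplicial_set:
  assumes "finite S" and "\<forall>x \<in> S. simplicial_in W E x"
  obtains fs where "shelling_seq W E fs" and "set fs = S"
  using finite_distinct_list[OF assms(1)] shelling_seq_if_all_simplicial assms(2) by metis

text \<open>W' is the set of vertices still present when the earlier of x and y is shelled.\<close>
lemma shelling_seq_first_of_two:
  assumes "shelling_seq W E fs" and "x \<in> set fs" and "y \<in> set fs"
  shows "\<exists>W'. W - set fs \<subseteq> W' \<and>
           (simplicial_in W' E x \<and> y \<in> W' \<or> simplicial_in W' E y \<and> x \<in> W')"
  using assms
proof (induction fs arbitrary: W)
  case (Cons h fs)
  show ?case
  proof (cases "h = x \<or> h = y")
    case True
    have "x \<in> W" and "y \<in> W"
      using shelling_seq_distinct_subset[OF Cons.prems(1)] Cons.prems(2,3) by blast+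
    moreover have "simplicial_in W E h"
      using Cons.prems(1) by simp
    ultimately show ?thesis
      using True by blast
  next
    case False
    then have "x \<in> set fs" and "y \<in> set fs" and "shelling_seq (W - {h}) E fs"
      using Cons.prems by auto
    then obtain W' where "W - {h} - set fs \<subseteq> W'"
      and "simplicial_in W' E x \<and> y \<in> W' \<or> simplicial_in W' E y \<and> x \<in> W'"
      using Cons.IH by blast
    moreover have "W - set (h # fs) = W - {h} - set fs" by auto
    ultimately show ?thesis by metis
  qed
qed simp

lemma shelling_feasible_outside_neighbours_adjacent:
  assumes "shelling_feasible V E F" and "x \<in> F" and "y \<in> V - F" and "z \<in> V - F"
    and "y \<noteq> z" and "E x y" and "E x z"
  shows "E y z"
proof -
  obtain fs where fs: "shelling_seq V E fs" "set fs = F"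
    using assms(1) unfolding shelling_feasible_iff_shelling_seq by blast
  have x: "x \<in> set fs" using fs(2) assms(2) by simp
  obtain W' where "V - set fs \<subseteq> W'" and "simplicial_in W' E x"
    using shelling_seq_first_of_two[OF fs(1) x x] by blast
  then show ?thesis using fs(2) assms(3-7) unfolding simplicial_in_def by blast
qed

locale split_graph_setting =
  fixes K I :: "'a set" and E :: "'a \<Rightarrow> 'a \<Rightarrow> bool"
  assumes split_graph: "split_graph K I E"
begin

lemma finite_vertices: "finite (K \<union> I)"
  and disjoint: "K \<inter> I = {}"
  and edge_vertices: "E x y \<Longrightarrow> x \<in> K \<union> I \<and> y \<in> K \<union> I"
  and edge_sym: "E x y \<Longrightarrow> E y x"
  and clique: "x \<in> K \<Longrightarrow> y \<in> K \<Longrightarrow> x \<noteq> y \<Longrightarrow> E x y"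
  and independent: "x \<in> I \<Longrightarrow> y \<in> I \<Longrightarrow> \<not> E x y"
  using split_graph unfolding split_graph_def by blast+

lemma neighbour_of_independent_in_clique: "x \<in> I \<Longrightarrow> E x y \<Longrightarrow> y \<in> K"
  using edge_vertices independent by blast

lemma simplicial_if_neighbours_in_clique:
  "x \<in> W \<Longrightarrow> (\<forall>y \<in> W. E x y \<longrightarrow> y \<in> K) \<Longrightarrow> simplicial_in W E x"
  unfolding simplicial_in_def using clique by blast

lemma simplicial_if_independent: "x \<in> I \<Longrightarrow> x \<in> W \<Longrightarrow> simplicial_in W E x"
  using simplicial_if_neighbours_in_clique neighbour_of_independent_in_clique by blast

lemma simplicial_if_nonisolated_adjacent:
  assumes "x \<in> W"
    and "\<forall>y \<in> W. \<forall>z \<in> W. y \<noteq> z \<and> \<not> isolated E y \<and> \<not> isolated E z \<longrightarrow> E y z"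
  shows "simplicial_in W E x"
  using assms edge_sym unfolding simplicial_in_def isolated_def by blast

lemma neighbour_of_simplicial_clique_vertex:
  assumes "simplicial_in W E a" and "a \<in> K" and "b \<in> K" and "b \<in> W"
    and "p \<in> W" and "p \<noteq> b" and "E a p"
  shows "E b p"
proof (cases "a = b")
  case False
  then have "E a b" using assms(2,3) clique by blast
  then show ?thesis using assms edge_sym unfolding simplicial_in_def by blast
qed (use assms in simp)

lemma adjacent_or_isolated_if_shelling_feasible:
  assumes u: "u \<in> K \<union> I" and v: "v \<in> K \<union> I" and "u \<noteq> v"
    and feasible: "shelling_feasible (K \<union> I) E (K \<union> I - {u, v})"
  shows "E u v \<or> isolated E u \<or> isolated E v"
proof (rule ccontr)
  assume "\<not> ?thesis"
  then have nuv: "\<not> E u v" and "\<not> isolated E u" and "\<not> isolated E v" by auto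
  then obtain nu nv where nu: "E u nu" and nv: "E v nv" unfolding isolated_def by blast
  have no_common_neighbour: "\<not> (E x u \<and> E x v)" if "x \<in> K \<union> I - {u, v}" for x
    using shelling_feasible_outside_neighbours_adjacent[OF feasible that] u v \<open>u \<noteq> v\<close> nuv
    by blast
  have mixed: False if "a \<in> K" and "b \<in> I" and "E b c" and ab: "{a, b} = {u, v}" for a b c
  proof -
    have "c \<in> K" using neighbour_of_independent_in_clique that(2,3) .
    have "\<not> E a b" using nuv ab edge_sym by (auto simp: doubleton_eq_iff)
    then have "c \<noteq> a" using \<open>E b c\<close> edge_sym by blast
    then have "E c a" using clique \<open>a \<in> K\<close> \<open>c \<in> K\<close> by blast
    moreover have "E c b" using \<open>E b c\<close> edge_sym by blast
    moreover have "c \<in> K \<union> I - {a, b}"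
      using \<open>c \<in> K\<close> \<open>c \<noteq> a\<close> \<open>b \<in> I\<close> disjoint by blast
    ultimately show False using no_common_neighbour ab by (auto simp: doubleton_eq_iff)
  qed
  consider "u \<in> K" "v \<in> K" | "u \<in> K" "v \<in> I" | "u \<in> I" "v \<in> K" | "u \<in> I" "v \<in> I"
    using u v by blast
  then show False
  proof cases
    case 1
    then show False using clique \<open>u \<noteq> v\<close> nuv by blast
  next
    case 2
    then show False using mixed[of u v nv] nv by blast
  next
    case 3
    then show False using mixed[of v u nu] nu by blast
  next
    case 4
    have "nu \<in> K" and "nv \<in> K"
      using 4 nu nv neighbour_of_independent_in_clique by blast+
    then have outside: "nu \<in> K \<union> I - {u, v}" "nv \<in> K \<union> I - {u, v}"
      using 4 disjoint by blast+
    obtain fs where fs: "shelling_seq (K \<union> I) E fs" "set fs = K \<union> I - {u, v}"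
      using feasible unfolding shelling_feasible_iff_shelling_seq by blast
    have "nu \<in> set fs" and "nv \<in> set fs" using outside fs(2) by simp_all
    then obtain W' where W': "K \<union> I - set fs \<subseteq> W'"
      and "simplicial_in W' E nu \<and> nv \<in> W' \<or> simplicial_in W' E nv \<and> nu \<in> W'"
      using shelling_seq_first_of_two[OF fs(1)] by blast
    moreover have "u \<in> W'" and "v \<in> W'" using W' fs(2) u v by auto
    moreover have "u \<noteq> nv" and "v \<noteq> nu" using 4 \<open>nu \<in> K\<close> \<open>nv \<in> K\<close> disjoint by blast+
    ultimately have "E nv u \<or> E nu v"
      using neighbour_of_simplicial_clique_vertex[of W' nu nv u]
        neighbour_of_simplicial_clique_vertex[of W' nv nu v]
        \<open>nu \<in> K\<close> \<open>nv \<in> K\<close> nu nv edge_sym by blast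
    then show False
      using no_common_neighbour outside nu nv edge_sym by blast
  qed
qed

lemma shelling_feasible_if_adjacent_or_isolated:
  assumes u: "u \<in> K \<union> I" and v: "v \<in> K \<union> I"
    and h: "E u v \<or> isolated E u \<or> isolated E v"
  shows "shelling_feasible (K \<union> I) E (K \<union> I - {u, v})"
proof -
  define A where "A = I - {u, v}"
  define B where "B = {k \<in> K - {u, v}. \<forall>i \<in> {u, v} \<inter> I. \<not> E k i}"
  define C where "C = {k \<in> K - {u, v}. \<exists>i \<in> {u, v} \<inter> I. E k i}"
  have "finite A" and "finite B" and "finite C"
    using finite_vertices unfolding A_def B_def C_def by simp_all
  have "\<forall>x \<in> A. simplicial_in (K \<union> I) E x"
    unfolding A_def using simplicial_if_independent by blast
  then obtain as where as: "shelling_seq (K \<union> I) E as" "set as = A"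
    using shelling_seq_of_simplicial_set \<open>finite A\<close> by blast
  have "simplicial_in (K \<union> I - A) E x" if "x \<in> B" for x
  proof (rule simplicial_if_neighbours_in_clique)
    show "x \<in> K \<union> I - A" using that disjoint unfolding A_def B_def by blast
    show "\<forall>y \<in> K \<union> I - A. E x y \<longrightarrow> y \<in> K" using that unfolding A_def B_def by blast
  qed
  then obtain bs where bs: "shelling_seq (K \<union> I - A) E bs" "set bs = B"
    using shelling_seq_of_simplicial_set \<open>finite B\<close> by blast
  have B_C: "B \<union> C = K - {u, v}" and "B \<inter> C = {}"
    unfolding B_def C_def by blast+
  have rest: "K \<union> I - A - B = C \<union> {u, v}"
    using B_C \<open>B \<inter> C = {}\<close> u v disjoint unfolding A_def by blast
  have C_adjacent: "E c t" if "c \<in> C" and "t \<in> {u, v} \<inter> I" and "\<not> isolated E t" for c t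
  proof -
    obtain i where i: "i \<in> {u, v} \<inter> I" "E c i" using \<open>c \<in> C\<close> unfolding C_def by blast
    show ?thesis
    proof (cases "i = t")
      case False
      then have "\<not> E u v" and "\<not> isolated E i"
        using i that(2) independent edge_sym unfolding isolated_def by blast+
      then show ?thesis using h that(2,3) i(1) False by blast
    qed (use i in simp)
  qed
  have pairwise: "\<forall>y \<in> C \<union> {u, v}. \<forall>z \<in> C \<union> {u, v}.
          y \<noteq> z \<and> \<not> isolated E y \<and> \<not> isolated E z \<longrightarrow> E y z"
  proof (intro ballI impI)
    fix y z assume y: "y \<in> C \<union> {u, v}" and z: "z \<in> C \<union> {u, v}"
      and yz: "y \<noteq> z \<and> \<not> isolated E y \<and> \<not> isolated E z"
    have "C \<subseteq> K" unfolding C_def by blast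
    consider "y \<in> K" "z \<in> K" | "y \<in> C" "z \<in> {u, v} \<inter> I" | "z \<in> C" "y \<in> {u, v} \<inter> I"
      | "y \<in> {u, v}" "z \<in> {u, v}"
      using y z u v \<open>C \<subseteq> K\<close> by blast
    then show "E y z"
    proof cases
      case 1
      then show ?thesis using clique yz by blast
    next
      case 2
      then show ?thesis using C_adjacent yz by blast
    next
      case 3
      then show ?thesis using C_adjacent yz edge_sym by blast
    next
      case 4
      then show ?thesis using h yz edge_sym by blast
    qed
  qed
  have "simplicial_in (K \<union> I - A - B) E x" if "x \<in> C" for x
    unfolding rest using simplicial_if_nonisolated_adjacent[OF _ pairwise] that by blast
  then obtain cs where cs: "shelling_seq (K \<union> I - A - B) E cs" "set cs = C"
    using shelling_seq_of_simplicial_set \<open>finite C\<close> by blast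
  have "shelling_seq (K \<union> I) E (as @ bs @ cs)"
    using as bs cs by (simp add: shelling_seq_append)
  moreover have "set (as @ bs @ cs) = K \<union> I - {u, v}"
    using as bs cs B_C unfolding A_def by auto
  ultimately show ?thesis
    unfolding shelling_feasible_iff_shelling_seq by blast
qed

end

theorem mainTheorem4:
  fixes K I :: "'a set" and E :: "'a \<Rightarrow> 'a \<Rightarrow> bool" and u v :: 'a
  assumes "split_graph K I E"
    and "u \<in> K \<union> I" and "v \<in> K \<union> I" and "u \<noteq> v"
  shows "shelling_feasible (K \<union> I) E ((K \<union> I) - {u, v}) \<longleftrightarrow>
           E u v \<or> isolated E u \<or> isolated E v"
proof -
  interpret split_graph_setting K I E
    using assms(1) by unfold_locales
  show ?thesis
    using adjacent_or_isolated_if_shelling_feasible shelling_feasible_if_adjacent_or_isolated assms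
    by blast
qed

end
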